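(* Let $d\ge2$, $0<\alpha\le2$ and $T\in\mathring{H}^{-\alpha/2}(\mathbb{R}^d)\cap L^1_{loc}(\mathbb{R}^d)$ with $T\ge0$. Then $(I_\alpha*T)(x)<\infty$ for a.e. $x\in\mathbb{R}^d$; equivalently $\int_{\mathbb{R}^d}T(x)(1+|x|)^{-(d-\alpha)}dx<\infty$.
   Context: $I_\alpha(x)=A_\alpha|x|^{-(d-\alpha)}$, $A_\alpha=\frac{\Gamma(\frac{d-\alpha}{2})}{\Gamma(\frac\alpha2)\pi^{d/2}2^\alpha}$. $\mathring{H}^{-\alpha/2}(\mathbb{R}^d)$: tempered distributions $\rho$ with $\hat\rho\in L^1_{loc}$ and $\int(2\pi|\xi|)^{-\alpha}|\hat\rho(\xi)|^2d\xi<\infty$. $T\in\mathring{H}^{-\alpha/2}\cap L^1_{loc}$ means the distribution is given by integration against an $L^1_{loc}$ function $T$. *)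

theory Defs
  imports "HOL-Analysis.Analysis"
begin

definition riesz_const :: "nat \<Rightarrow> real \<Rightarrow> real" where
  "riesz_const d \<alpha> = Gamma ((real d - \<alpha>) / 2) / (Gamma (\<alpha> / 2) * pi powr (real d / 2) * 2 powr \<alpha>)"

definition riesz_kernel :: "real \<Rightarrow> 'a::euclidean_space \<Rightarrow> real" where
  "riesz_kernel \<alpha> x = riesz_const DIM('a) \<alpha> * norm x powr (-(real DIM('a) - \<alpha>))"

fun iter_dderiv :: "'a::euclidean_space list \<Rightarrow> ('a \<Rightarrow> complex) \<Rightarrow> 'a \<Rightarrow> complex" where
  "iter_dderiv [] f = f"
| "iter_dderiv (v # vs) f = (\<lambda>x. frechet_derivative (iter_dderiv vs f) (at x) v)"

definition schwartz :: "('a::euclidean_space \<Rightarrow> complex) set" where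
  "schwartz = {f. (\<forall>vs. set vs \<subseteq> Basis \<longrightarrow>
        (\<forall>x. iter_dderiv vs f differentiable (at x)) \<and>
        (\<forall>N::nat. \<exists>C. \<forall>x. (1 + norm x) ^ N * norm (iter_dderiv vs f x) \<le> C))}"

text \<open>Fourier transform with the convention hat f(xi) = int f(x) e^{-2 pi i x.xi} dx.\<close>
definition fourier :: "('a::euclidean_space \<Rightarrow> complex) \<Rightarrow> 'a \<Rightarrow> complex" where
  "fourier f \<xi> = (\<integral>x. f x * exp (- (2 * pi * \<i>) * complex_of_real (x \<bullet> \<xi>)) \<partial>lborel)"

definition locally_integrable :: "('a::euclidean_space \<Rightarrow> 'b::{banach, second_countable_topology}) \<Rightarrow> bool" where
  "locally_integrable f \<longleftrightarrow> f \<in> borel_measurable lborel \<and>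
     (\<forall>K. compact K \<longrightarrow> set_integrable lborel K f)"

text \<open>T (an L^1_loc function, viewed as a tempered distribution) lies in the homogeneous
  Sobolev space of order -alpha/2: its distributional Fourier transform is an L^1_loc
  function g, i.e. <T, hat phi> = <g, phi> for all Schwartz phi, and
  int (2 pi |xi|)^{-alpha} |g xi|^2 d xi < infinity.\<close>
definition in_homog_sobolev_neg :: "real \<Rightarrow> ('a::euclidean_space \<Rightarrow> real) \<Rightarrow> bool" where
  "in_homog_sobolev_neg \<alpha> T \<longleftrightarrow>
     (\<forall>\<phi>\<in>schwartz. integrable lborel (\<lambda>x. complex_of_real (T x) * \<phi> x)) \<and>
     (\<exists>g :: 'a \<Rightarrow> complex. locally_integrable g \<and>
        (\<forall>\<phi>\<in>schwartz. integrable lborel (\<lambda>\<xi>. g \<xi> * \<phi> \<xi>) \<and>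
           (\<integral>x. complex_of_real (T x) * fourier \<phi> x \<partial>lborel) = (\<integral>\<xi>. g \<xi> * \<phi> \<xi> \<partial>lborel)) \<and>
        (\<integral>\<^sup>+\<xi>. ennreal ((2 * pi * norm \<xi>) powr (-\<alpha>) * (cmod (g \<xi>))\<^sup>2) \<partial>lborel) < \<infinity>)"

end

theory Submission
  imports Defs "HOL-Probability.Probability" "HOL-Real_Asymp.Real_Asymp"
begin

text \<open>
  Write s = d - alpha and let g be the Fourier transform of T. The Fourier transform of
  phi_l(xi) = l^d exp(-pi l^2 |xi|^2) is the Gaussian exp(-pi |x|^2 / l^2), so the Sobolev
  condition gives  int T(x) exp(-pi |x|^2 / l^2) dx = int g phi_l.  Weighted AM-GM splits
  |g| phi_l into (2 pi |xi|)^(-alpha) |g|^2, whose integral is finite by hypothesis, and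
  (2 pi |xi|)^alpha phi_l^2, whose integral is O(l^s). Hence the mass of T in the ball of
  radius r is O(r^(s/2)), and summing over dyadic balls gives int T(x) (1 + |x|)^(-s) dx < oo.
  Since |z|^(-s) is locally integrable, int_{|x| <= R} |x - y|^(-s) dx <= C_R (1 + |y|)^(-s),
  so by Tonelli the Riesz potential of T is integrable over every ball and thus finite a.e.
\<close>

section \<open>Gaussians and their Fourier transform\<close>

definition gaussian :: "real \<Rightarrow> 'a::real_normed_vector \<Rightarrow> real" where
  "gaussian l x = exp (- pi * (norm x / l)\<^sup>2)"

lemma gaussian_nonneg [simp]: "gaussian l x \<ge> 0"
  by (simp add: gaussian_def)

lemma borel_measurable_gaussian [measurable]: "gaussian l \<in> borel_measurable borel"
  unfolding gaussian_def by measurable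

lemma gaussian_real: "gaussian l (t::real) = exp (- pi * (t / l)\<^sup>2)"
  by (simp add: gaussian_def power_divide)

lemma gaussian_prod_Basis:
  fixes x :: "'a::euclidean_space"
  shows "gaussian l x = (\<Prod>b\<in>Basis. gaussian l (x \<bullet> b))"
proof -
  have "(norm x)\<^sup>2 = (\<Sum>b\<in>Basis. (x \<bullet> b)\<^sup>2)"
    unfolding power2_norm_eq_inner by (subst euclidean_inner) (simp add: power2_eq_square)
  then show ?thesis
    by (simp add: gaussian_real gaussian_def power_divide sum_divide_distrib sum_distrib_left
        exp_sum[symmetric] sum_negf)
qed

lemma fourier_gaussian_real:
  fixes l w :: real
  assumes l: "l > 0"
  shows "(\<integral>t. complex_of_real (gaussian l t) * exp (- (2 * pi * \<i>) * complex_of_real (t * w)) \<partial>lborel)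
         = complex_of_real (l * gaussian (1 / l) w)"
proof -
  \<comment> \<open>After the substitution u = c t the integral is the characteristic function of N(0,1) at \<theta>.\<close>
  define c where "c = sqrt (2 * pi) / l"
  have c: "c > 0" using l by (simp add: c_def)
  define \<theta> where "\<theta> = - 2 * pi * w / c"
  let ?I = "\<integral>t. complex_of_real (gaussian l t) * exp (- (2 * pi * \<i>) * complex_of_real (t * w)) \<partial>lborel"
  have "char std_normal_distribution \<theta>
      = (\<integral>u. complex_of_real (std_normal_density u) * iexp (\<theta> * u) \<partial>lborel)"
    unfolding char_def by (subst integral_density) (auto simp: normal_density_nonneg scaleR_conv_of_real)
  also have "\<dots> = c *\<^sub>R (\<integral>t. complex_of_real (std_normal_density (0 + c * t)) * iexp (\<theta> * (0 + c * t)) \<partial>lborel)"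
    using c by (subst lborel_integral_real_affine[where c = c and t = 0]) auto
  also have "(\<lambda>t. complex_of_real (std_normal_density (0 + c * t)) * iexp (\<theta> * (0 + c * t)))
      = (\<lambda>t. complex_of_real (1 / sqrt (2 * pi)) *
             (complex_of_real (gaussian l t) * exp (- (2 * pi * \<i>) * complex_of_real (t * w))))"
  proof
    fix t
    have "exp (- ((c * t)\<^sup>2) / 2) = gaussian l t"
      using l by (simp add: gaussian_real c_def power_mult_distrib power_divide)
    moreover have "\<i> * complex_of_real (\<theta> * (c * t)) = - (2 * pi * \<i>) * complex_of_real (t * w)"
      using c by (simp add: \<theta>_def field_simps)
    ultimately show "complex_of_real (std_normal_density (0 + c * t)) * iexp (\<theta> * (0 + c * t))
        = complex_of_real (1 / sqrt (2 * pi)) *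
          (complex_of_real (gaussian l t) * exp (- (2 * pi * \<i>) * complex_of_real (t * w)))"
      unfolding normal_density_def by simp
  qed
  finally have "char std_normal_distribution \<theta> = complex_of_real (c / sqrt (2 * pi)) * ?I"
    by (simp add: scaleR_conv_of_real)
  moreover have "char std_normal_distribution \<theta> = gaussian (1 / l) w"
    using c l by (simp add: char_std_normal_distribution gaussian_real \<theta>_def c_def power_divide
        power_mult_distrib power2_eq_square field_simps)
  moreover have "c / sqrt (2 * pi) = 1 / l"
    using l by (simp add: c_def)
  ultimately show ?thesis
    using l c by (simp add: field_simps)
qed

lemma gaussian_real_eq_normal_density:
  assumes l: "l > 0"
  shows "gaussian l = (\<lambda>t::real. l * normal_density 0 (l / sqrt (2 * pi)) t)"
proof
  fix t :: real
  have "sqrt (2 * pi * (l / sqrt (2 * pi))\<^sup>2) = l"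
    using l by (simp add: power_divide real_sqrt_mult real_sqrt_divide)
  moreover have "- ((t - 0)\<^sup>2) / (2 * (l / sqrt (2 * pi))\<^sup>2) = - pi * (t / l)\<^sup>2"
    using l by (simp add: power_divide field_simps)
  ultimately show "gaussian l t = l * normal_density 0 (l / sqrt (2 * pi)) t"
    unfolding normal_density_def gaussian_real using l by simp
qed

lemma integrable_gaussian_real:
  assumes "l > 0" shows "integrable lborel (gaussian l :: real \<Rightarrow> real)"
  unfolding gaussian_real_eq_normal_density[OF assms] using assms
  by (intro integrable_mult_right integrable_normal_density) simp

lemma integral_gaussian_real:
  assumes "l > 0" shows "(\<integral>t. gaussian l (t::real) \<partial>lborel) = l"
  unfolding gaussian_real_eq_normal_density[OF assms] using assms by simp

lemma nn_integral_gaussian: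
  assumes l: "l > 0"
  shows "(\<integral>\<^sup>+x. ennreal (gaussian l (x::'a::euclidean_space)) \<partial>lborel) = ennreal (l ^ DIM('a))"
proof -
  have "(\<integral>\<^sup>+x. ennreal (gaussian l (x::'a)) \<partial>lborel)
      = (\<integral>\<^sup>+x. (\<Prod>b\<in>Basis. ennreal (gaussian l ((x::'a) \<bullet> b))) \<partial>lborel)"
    by (subst gaussian_prod_Basis) (simp add: prod_ennreal)
  also have "\<dots> = (\<Prod>b\<in>(Basis::'a set). (\<integral>\<^sup>+t. ennreal (gaussian l (t::real)) \<partial>lborel))"
    by (rule nn_integral_lborel_prod) auto
  also have "(\<integral>\<^sup>+t. ennreal (gaussian l (t::real)) \<partial>lborel) = ennreal l"
    using l by (simp add: nn_integral_eq_integral integrable_gaussian_real integral_gaussian_real)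
  finally show ?thesis
    using l by (simp add: prod_constant ennreal_power)
qed

lemma integrable_gaussian_real_modulated:
  assumes l: "l > 0"
  shows "integrable lborel (\<lambda>t. complex_of_real (gaussian l t) * exp (- (2 * pi * \<i>) * complex_of_real (t * w)))"
proof (rule Bochner_Integration.integrable_bound[OF integrable_gaussian_real[OF l]])
  show "AE t in lborel. norm (complex_of_real (gaussian l t) * exp (- (2 * pi * \<i>) * complex_of_real (t * w)))
      \<le> norm (gaussian l t)"
    by (simp add: norm_mult norm_exp_eq_Re)
qed simp

lemma fourier_gaussian:
  fixes \<xi> :: "'a::euclidean_space"
  assumes l: "l > 0"
  shows "fourier (\<lambda>x. complex_of_real (gaussian l x)) \<xi> = complex_of_real (l ^ DIM('a) * gaussian (1 / l) \<xi>)"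
proof -
  interpret P: product_sigma_finite "\<lambda>_::'a. lborel :: real measure"
    by (simp add: product_sigma_finite_def sigma_finite_lborel)
  define h where "h b t = complex_of_real (gaussian l t) * exp (- (2 * pi * \<i>) * complex_of_real (t * (\<xi> \<bullet> b)))"
    for b :: 'a and t :: real
  have [measurable]: "h b \<in> borel_measurable borel" for b
    unfolding h_def by measurable
  have "exp (- (2 * pi * \<i>) * complex_of_real (x \<bullet> \<xi>))
      = (\<Prod>b\<in>Basis. exp (- (2 * pi * \<i>) * complex_of_real ((x \<bullet> b) * (\<xi> \<bullet> b))))" for x :: 'a
    by (subst euclidean_inner) (simp add: exp_sum[symmetric] sum_distrib_left)
  then have split: "complex_of_real (gaussian l x) * exp (- (2 * pi * \<i>) * complex_of_real (x \<bullet> \<xi>))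
      = (\<Prod>b\<in>Basis. h b (x \<bullet> b))" for x :: 'a
    by (simp only: h_def prod.distrib gaussian_prod_Basis[of l x] of_real_prod)
  have "fourier (\<lambda>x. complex_of_real (gaussian l x)) \<xi> = (\<integral>x. (\<Prod>b\<in>Basis. h b (x \<bullet> b)) \<partial>lborel)"
    unfolding fourier_def split ..
  also have "\<dots> = (\<integral>f. (\<Prod>b\<in>Basis. h b ((\<Sum>b'\<in>Basis. f b' *\<^sub>R b') \<bullet> b)) \<partial>(\<Pi>\<^sub>M b\<in>Basis. lborel))"
    by (subst lborel_eq) (subst integral_distr, auto)
  also have "\<dots> = (\<integral>f. (\<Prod>b\<in>Basis. h b (f b)) \<partial>(\<Pi>\<^sub>M b\<in>Basis. lborel))"
    by (intro Bochner_Integration.integral_cong refl prod.cong)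
      (auto simp: inner_sum_left inner_Basis if_distrib sum.delta cong: if_cong)
  also have "\<dots> = (\<Prod>b\<in>(Basis::'a set). integral\<^sup>L lborel (h b))"
    by (rule P.product_integral_prod) (simp, unfold h_def, rule integrable_gaussian_real_modulated[OF l])
  also have "\<dots> = (\<Prod>b\<in>(Basis::'a set). complex_of_real (l * gaussian (1 / l) (\<xi> \<bullet> b)))"
    unfolding h_def fourier_gaussian_real[OF l] ..
  also have "\<dots> = complex_of_real (l ^ DIM('a) * gaussian (1 / l) \<xi>)"
    by (simp add: gaussian_prod_Basis[of _ \<xi>] prod.distrib prod_constant)
  finally show ?thesis .
qed

section \<open>Gaussians are Schwartz functions\<close>

inductive_set poly_fun :: "('a::real_inner \<Rightarrow> real) set" where
  const: "(\<lambda>x. c) \<in> poly_fun"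
| inner: "(\<lambda>x. x \<bullet> w) \<in> poly_fun"
| add: "p \<in> poly_fun \<Longrightarrow> q \<in> poly_fun \<Longrightarrow> (\<lambda>x. p x + q x) \<in> poly_fun"
| mult: "p \<in> poly_fun \<Longrightarrow> q \<in> poly_fun \<Longrightarrow> (\<lambda>x. p x * q x) \<in> poly_fun"

lemma poly_fun_has_derivative:
  assumes "p \<in> poly_fun"
  shows "\<exists>D. (\<forall>x. (p has_derivative (\<lambda>v. D v x)) (at x)) \<and> (\<forall>v. D v \<in> poly_fun)"
  using assms
proof induction
  case (const c)
  show ?case by (rule exI[of _ "\<lambda>v x. 0"]) (auto intro: poly_fun.const)
next
  case (inner w)
  show ?case by (rule exI[of _ "\<lambda>v x. v \<bullet> w"]) (auto intro!: poly_fun.const derivative_eq_intros)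
next
  case (add p q)
  then obtain Dp Dq where p: "\<forall>x. (p has_derivative (\<lambda>v. Dp v x)) (at x)" "\<forall>v. Dp v \<in> poly_fun"
    and q: "\<forall>x. (q has_derivative (\<lambda>v. Dq v x)) (at x)" "\<forall>v. Dq v \<in> poly_fun" by blast
  show ?case
    by (rule exI[of _ "\<lambda>v x. Dp v x + Dq v x"]) (use p q in \<open>auto intro!: poly_fun.add has_derivative_add\<close>)
next
  case (mult p q)
  then obtain Dp Dq where p: "\<forall>x. (p has_derivative (\<lambda>v. Dp v x)) (at x)" "\<forall>v. Dp v \<in> poly_fun"
    and q: "\<forall>x. (q has_derivative (\<lambda>v. Dq v x)) (at x)" "\<forall>v. Dq v \<in> poly_fun" by blast
  show ?case
    by (rule exI[of _ "\<lambda>v x. p x * Dq v x + Dp v x * q x"])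
      (use p q mult in \<open>auto intro!: poly_fun.add poly_fun.mult has_derivative_mult\<close>)
qed

lemma poly_fun_polynomial_growth:
  assumes "p \<in> poly_fun"
  shows "\<exists>C k. C \<ge> 0 \<and> (\<forall>x. \<bar>p x\<bar> \<le> C * (1 + norm x) ^ k)"
  using assms
proof induction
  case (const c)
  show ?case by (rule exI[of _ "\<bar>c\<bar>"], rule exI[of _ 0]) auto
next
  case (inner w)
  have "\<bar>x \<bullet> w\<bar> \<le> norm w * (1 + norm x) ^ 1" for x
  proof -
    have "\<bar>x \<bullet> w\<bar> \<le> norm x * norm w" by (rule Cauchy_Schwarz_ineq2)
    also have "\<dots> \<le> norm w * (1 + norm x) ^ 1" by (simp add: mult.commute mult_left_mono)
    finally show ?thesis .
  qed
  then show ?case by (intro exI[of _ "norm w"] exI[of _ 1]) simp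
next
  case (add p q)
  then obtain Cp kp Cq kq where p: "Cp \<ge> 0" "\<forall>x. \<bar>p x\<bar> \<le> Cp * (1 + norm x) ^ kp"
    and q: "Cq \<ge> 0" "\<forall>x. \<bar>q x\<bar> \<le> Cq * (1 + norm x) ^ kq" by blast
  have "\<bar>p x + q x\<bar> \<le> (Cp + Cq) * (1 + norm x) ^ (kp + kq)" for x
  proof -
    have "(1 + norm x) ^ kp \<le> (1 + norm x) ^ (kp + kq)" "(1 + norm x) ^ kq \<le> (1 + norm x) ^ (kp + kq)"
      by (auto intro!: power_increasing)
    then have "Cp * (1 + norm x) ^ kp + Cq * (1 + norm x) ^ kq \<le> (Cp + Cq) * (1 + norm x) ^ (kp + kq)"
      using p(1) q(1) by (simp add: distrib_right add_mono mult_left_mono)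
    then show ?thesis using p(2) q(2) by (smt (verit))
  qed
  then show ?case using p q by (intro exI[of _ "Cp + Cq"] exI[of _ "kp + kq"]) simp
next
  case (mult p q)
  then obtain Cp kp Cq kq where p: "Cp \<ge> 0" "\<forall>x. \<bar>p x\<bar> \<le> Cp * (1 + norm x) ^ kp"
    and q: "Cq \<ge> 0" "\<forall>x. \<bar>q x\<bar> \<le> Cq * (1 + norm x) ^ kq" by blast
  have "\<bar>p x * q x\<bar> \<le> (Cp * Cq) * (1 + norm x) ^ (kp + kq)" for x
  proof -
    have "\<bar>p x * q x\<bar> \<le> (Cp * (1 + norm x) ^ kp) * (Cq * (1 + norm x) ^ kq)"
      unfolding abs_mult using p q by (intro mult_mono) auto
    then show ?thesis by (simp add: power_add algebra_simps)
  qed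
  then show ?case using p q by (intro exI[of _ "Cp * Cq"] exI[of _ "kp + kq"]) simp
qed

lemma poly_fun_sum:
  "finite A \<Longrightarrow> (\<And>i. i \<in> A \<Longrightarrow> f i \<in> poly_fun) \<Longrightarrow> (\<lambda>x. \<Sum>i\<in>A. f i x) \<in> poly_fun"
  by (induction A rule: finite_induct) (auto intro: poly_fun.const[of 0, simplified] poly_fun.add)

lemma poly_fun_norm_square: "(\<lambda>x::'a::euclidean_space. (norm x)\<^sup>2) \<in> poly_fun"
proof -
  have "(\<lambda>x::'a. \<Sum>b\<in>Basis. (x \<bullet> b) * (x \<bullet> b)) \<in> poly_fun"
    by (rule poly_fun_sum) (auto intro!: poly_fun.mult poly_fun.inner)
  moreover have "(\<Sum>b\<in>Basis. (x \<bullet> b) * (x \<bullet> b)) = (norm x)\<^sup>2" for x :: 'a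
    unfolding power2_norm_eq_inner by (subst (3) euclidean_inner) simp
  ultimately show ?thesis by simp
qed

lemma polynomial_times_gaussian_bounded:
  assumes l: "l > 0"
  shows "\<exists>M. \<forall>x::'a::real_normed_vector. (1 + norm x) ^ m * gaussian l x \<le> M"
proof -
  have "((\<lambda>r. (1 + r) ^ m * exp (- pi * (r / l)\<^sup>2)) \<longlongrightarrow> 0) at_top"
    using l by real_asymp
  then have "eventually (\<lambda>r. (1 + r) ^ m * exp (- pi * (r / l)\<^sup>2) \<le> 1) at_top"
    by (rule eventually_mono[OF order_tendstoD(2)[OF _ zero_less_one]]) auto
  then obtain R where R: "\<And>r. r \<ge> R \<Longrightarrow> (1 + r) ^ m * exp (- pi * (r / l)\<^sup>2) \<le> 1"
    by (auto simp: eventually_at_top_linorder)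
  have "(1 + norm x) ^ m * gaussian l x \<le> max 1 ((1 + \<bar>R\<bar>) ^ m)" for x :: 'a
  proof (cases "norm x \<ge> R")
    case True
    then have "(1 + norm x) ^ m * gaussian l x \<le> 1" using R[of "norm x"] by (simp add: gaussian_def)
    then show ?thesis by (rule max.coboundedI1)
  next
    case False
    have "(1 + norm x) ^ m * gaussian l x \<le> (1 + \<bar>R\<bar>) ^ m * 1"
      using False by (intro mult_mono power_mono) (auto simp: gaussian_def)
    then show ?thesis by simp
  qed
  then show ?thesis by blast
qed

lemma poly_fun_times_exp_has_derivative:
  assumes "p \<in> poly_fun" and "\<psi> \<in> poly_fun"
  shows "\<exists>Q. (\<forall>v. Q v \<in> poly_fun) \<and>
    (\<forall>x. ((\<lambda>x. complex_of_real (p x * exp (\<psi> x))) has_derivative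
          (\<lambda>v. complex_of_real (Q v x * exp (\<psi> x)))) (at x))"
proof -
  obtain Dp where Dp: "\<And>x. (p has_derivative (\<lambda>v. Dp v x)) (at x)" "\<And>v. Dp v \<in> poly_fun"
    using poly_fun_has_derivative[OF assms(1)] by blast
  obtain D\<psi> where D\<psi>: "\<And>x. (\<psi> has_derivative (\<lambda>v. D\<psi> v x)) (at x)" "\<And>v. D\<psi> v \<in> poly_fun"
    using poly_fun_has_derivative[OF assms(2)] by blast
  show ?thesis
  proof (intro exI[of _ "\<lambda>v x. Dp v x + p x * D\<psi> v x"] conjI allI)
    fix v show "(\<lambda>x. Dp v x + p x * D\<psi> v x) \<in> poly_fun"
      using Dp D\<psi> assms by (auto intro!: poly_fun.add poly_fun.mult)
  next
    fix x
    have "((\<lambda>x. exp (\<psi> x)) has_derivative (\<lambda>v. D\<psi> v x * exp (\<psi> x))) (at x)"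
      by (rule DERIV_compose_FDERIV[OF DERIV_exp D\<psi>(1)])
    then have "((\<lambda>x. p x * exp (\<psi> x)) has_derivative
        (\<lambda>v. p x * (D\<psi> v x * exp (\<psi> x)) + Dp v x * exp (\<psi> x))) (at x)"
      by (rule has_derivative_mult[OF Dp(1)])
    from has_derivative_of_real[OF this]
    show "((\<lambda>x. complex_of_real (p x * exp (\<psi> x))) has_derivative
        (\<lambda>v. complex_of_real ((Dp v x + p x * D\<psi> v x) * exp (\<psi> x)))) (at x)"
      by (rule has_derivative_eq_rhs) (auto simp: algebra_simps)
  qed
qed

lemma iter_dderiv_poly_fun_times_exp:
  assumes "p \<in> poly_fun" and "\<psi> \<in> poly_fun"
  shows "\<exists>q\<in>poly_fun. iter_dderiv vs (\<lambda>x. complex_of_real (p x * exp (\<psi> x)))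
                       = (\<lambda>x. complex_of_real (q x * exp (\<psi> x)))"
proof (induction vs)
  case Nil
  then show ?case using assms(1) by auto
next
  case (Cons v vs)
  then obtain q where q: "q \<in> poly_fun"
    "iter_dderiv vs (\<lambda>x. complex_of_real (p x * exp (\<psi> x))) = (\<lambda>x. complex_of_real (q x * exp (\<psi> x)))"
    by blast
  obtain Q where Q: "\<And>v. Q v \<in> poly_fun"
    "\<And>x. ((\<lambda>x. complex_of_real (q x * exp (\<psi> x))) has_derivative
             (\<lambda>v. complex_of_real (Q v x * exp (\<psi> x)))) (at x)"
    using poly_fun_times_exp_has_derivative[OF q(1) assms(2)] by blast
  have "iter_dderiv (v # vs) (\<lambda>x. complex_of_real (p x * exp (\<psi> x)))
      = (\<lambda>x. frechet_derivative (\<lambda>x. complex_of_real (q x * exp (\<psi> x))) (at x) v)"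
    by (simp only: iter_dderiv.simps q(2))
  also have "\<dots> = (\<lambda>x. complex_of_real (Q v x * exp (\<psi> x)))"
  proof
    fix x
    show "frechet_derivative (\<lambda>x. complex_of_real (q x * exp (\<psi> x))) (at x) v = complex_of_real (Q v x * exp (\<psi> x))"
      using fun_cong[OF frechet_derivative_at[OF Q(2)[of x]], of v] by simp
  qed
  finally show ?case using Q(1) by blast
qed

lemma gaussian_in_schwartz:
  assumes l: "l > 0"
  shows "(\<lambda>x::'a::euclidean_space. complex_of_real (c * gaussian l x)) \<in> schwartz"
proof -
  define \<psi> where "\<psi> x = - pi / l\<^sup>2 * (norm x)\<^sup>2" for x :: 'a
  have \<psi>: "\<psi> \<in> poly_fun"
    unfolding \<psi>_def by (rule poly_fun.mult[OF poly_fun.const poly_fun_norm_square])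
  have gaussian_eq: "gaussian l x = exp (\<psi> x)" for x
    by (simp add: gaussian_def \<psi>_def power_divide)
  have iter: "\<exists>q\<in>poly_fun. iter_dderiv vs (\<lambda>x. complex_of_real (c * gaussian l x))
      = (\<lambda>x. complex_of_real (q x * exp (\<psi> x)))" for vs
    unfolding gaussian_eq by (rule iter_dderiv_poly_fun_times_exp[OF poly_fun.const \<psi>])
  show ?thesis unfolding schwartz_def
  proof (intro CollectI allI impI conjI)
    fix vs :: "'a list" and x :: 'a
    obtain q where q: "q \<in> poly_fun"
      "iter_dderiv vs (\<lambda>x. complex_of_real (c * gaussian l x)) = (\<lambda>x. complex_of_real (q x * exp (\<psi> x)))"
      using iter by blast
    show "iter_dderiv vs (\<lambda>x. complex_of_real (c * gaussian l x)) differentiable at x"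
      unfolding q(2) using poly_fun_times_exp_has_derivative[OF q(1) \<psi>]
      by (auto simp: differentiable_def)
  next
    fix vs :: "'a list" and N :: nat
    obtain q where q: "q \<in> poly_fun"
      "iter_dderiv vs (\<lambda>x. complex_of_real (c * gaussian l x)) = (\<lambda>x. complex_of_real (q x * exp (\<psi> x)))"
      using iter by blast
    obtain C k where Ck: "C \<ge> 0" "\<And>x. \<bar>q x\<bar> \<le> C * (1 + norm x) ^ k"
      using poly_fun_polynomial_growth[OF q(1)] by blast
    obtain M where M: "\<And>x::'a. (1 + norm x) ^ (N + k) * gaussian l x \<le> M"
      using polynomial_times_gaussian_bounded[OF l, of "N + k"] by blast
    have "(1 + norm x) ^ N * cmod (iter_dderiv vs (\<lambda>x. complex_of_real (c * gaussian l x)) x) \<le> C * M" for x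
    proof -
      have "(1 + norm x) ^ N * cmod (iter_dderiv vs (\<lambda>x. complex_of_real (c * gaussian l x)) x)
          = (1 + norm x) ^ N * (\<bar>q x\<bar> * gaussian l x)"
        unfolding q(2) by (simp add: gaussian_eq abs_mult norm_mult del: of_real_mult)
      also have "\<dots> \<le> (1 + norm x) ^ N * ((C * (1 + norm x) ^ k) * gaussian l x)"
        using Ck(2)[of x] by (intro mult_left_mono mult_right_mono) (auto intro: mult_nonneg_nonneg)
      also have "\<dots> = C * ((1 + norm x) ^ (N + k) * gaussian l x)"
        by (simp add: power_add algebra_simps)
      also have "\<dots> \<le> C * M" using M[of x] Ck(1) by (intro mult_left_mono)
      finally show ?thesis .
    qed
    then show "\<exists>C. \<forall>x. (1 + norm x) ^ N * cmod (iter_dderiv vs (\<lambda>x. complex_of_real (c * gaussian l x)) x) \<le> C"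
      by blast
  qed
qed

section \<open>Gaussian averages of T from the Sobolev condition\<close>

lemma mult_le_weighted_squares:
  fixes G P u :: real
  assumes u: "u > 0"
  shows "G * P \<le> u * G\<^sup>2 + P\<^sup>2 / u"
proof -
  have "0 \<le> (u * G - P)\<^sup>2 / u" using u by simp
  then have "2 * (G * P) \<le> u * G\<^sup>2 + P\<^sup>2 / u"
    using u by (simp add: power2_eq_square field_simps)
  moreover have "0 \<le> u * G\<^sup>2 + P\<^sup>2 / u" using u by simp
  ultimately show ?thesis by linarith
qed

lemma nn_integral_mult_le_weighted_squares:
  fixes G P w w' :: "'b \<Rightarrow> real"
  assumes t: "t > 0" and w: "AE x in M. 0 < w x \<and> w x * w' x = 1"
    and [measurable]: "G \<in> borel_measurable M" "P \<in> borel_measurable M"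
      "w \<in> borel_measurable M" "w' \<in> borel_measurable M"
  shows "(\<integral>\<^sup>+x. ennreal (G x * P x) \<partial>M)
    \<le> ennreal t * (\<integral>\<^sup>+x. ennreal (w x * (G x)\<^sup>2) \<partial>M) + ennreal (1 / t) * (\<integral>\<^sup>+x. ennreal (w' x * (P x)\<^sup>2) \<partial>M)"
proof -
  have "(\<integral>\<^sup>+x. ennreal (G x * P x) \<partial>M)
      \<le> (\<integral>\<^sup>+x. ennreal t * ennreal (w x * (G x)\<^sup>2) + ennreal (1 / t) * ennreal (w' x * (P x)\<^sup>2) \<partial>M)"
    using w
  proof (intro nn_integral_mono_AE, eventually_elim)
    case (elim x)
    then have w'_eq: "w' x = 1 / w x" by (simp add: eq_divide_eq mult.commute)
    with elim have w': "w' x = 1 / w x" "w' x > 0" by simp_all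
    have "G x * P x \<le> (t * w x) * (G x)\<^sup>2 + (P x)\<^sup>2 / (t * w x)"
      using t elim by (intro mult_le_weighted_squares) simp
    also have "\<dots> = t * (w x * (G x)\<^sup>2) + (1 / t) * (w' x * (P x)\<^sup>2)"
      by (simp add: w'(1))
    finally show ?case
      using t elim w' by (simp add: ennreal_mult[symmetric] ennreal_plus[symmetric] ennreal_leI del: ennreal_plus)
  qed
  also have "\<dots> = ennreal t * (\<integral>\<^sup>+x. ennreal (w x * (G x)\<^sup>2) \<partial>M) + ennreal (1 / t) * (\<integral>\<^sup>+x. ennreal (w' x * (P x)\<^sup>2) \<partial>M)"
    by (subst nn_integral_add) (auto simp: nn_integral_cmult)
  finally show ?thesis .
qed

lemma powr_times_gaussian_le:
  fixes \<xi> :: "'a::real_normed_vector"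
  assumes l: "l > 0" and \<alpha>: "0 < \<alpha>" "\<alpha> \<le> 2"
  shows "(2 * pi * norm \<xi>) powr \<alpha> * gaussian (1 / l) \<xi> \<le> (1 + 4 * pi) * l powr (- \<alpha>)"
proof -
  define u where "u = 2 * pi * l * norm \<xi>"
  have u: "u \<ge> 0" using l by (simp add: u_def)
  have "(2 * pi * norm \<xi>) powr \<alpha> = (u / l) powr \<alpha>" using l by (simp add: u_def mult.assoc)
  also have "\<dots> = u powr \<alpha> / l powr \<alpha>" using l u by (simp add: powr_divide)
  finally have "(2 * pi * norm \<xi>) powr \<alpha> = u powr \<alpha> / l powr \<alpha>" .
  then have "(2 * pi * norm \<xi>) powr \<alpha> = u powr \<alpha> * l powr (- \<alpha>)"
    by (simp add: powr_minus divide_inverse)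
  moreover have "gaussian (1 / l) \<xi> = exp (- (u\<^sup>2 / (4 * pi)))"
    by (simp add: gaussian_def u_def power_mult_distrib power2_eq_square field_simps)
  moreover have "u powr \<alpha> \<le> 1 + u\<^sup>2"
  proof (cases "u \<le> 1")
    case True
    then have "u powr \<alpha> \<le> 1" using u \<alpha> by (simp add: powr_le1)
    then show ?thesis by (smt (verit) zero_le_power2)
  next
    case False
    then have "u powr \<alpha> \<le> u powr 2" using \<alpha> by (intro powr_mono) auto
    then show ?thesis using u by (simp add: powr_numeral)
  qed
  moreover have "(1 + u\<^sup>2) * exp (- (u\<^sup>2 / (4 * pi))) \<le> 1 + 4 * pi"
  proof -
    define y where "y = u\<^sup>2 / (4 * pi)"
    have "y \<le> exp y" using exp_ge_add_one_self[of y] by linarith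
    then have "u\<^sup>2 * exp (- y) \<le> 4 * pi" by (simp add: y_def exp_minus field_simps)
    moreover have "exp (- y) \<le> 1" by (simp add: y_def)
    ultimately show ?thesis unfolding y_def distrib_right by linarith
  qed
  ultimately have "(2 * pi * norm \<xi>) powr \<alpha> * gaussian (1 / l) \<xi> \<le> (1 + 4 * pi) * l powr (- \<alpha>)"
    by (smt (verit, best) exp_gt_zero mult_right_mono mult.commute mult.left_commute powr_ge_zero)
  then show ?thesis .
qed

lemma nn_integral_powr_times_gaussian_square_le:
  assumes l: "l > 0" and \<alpha>: "0 < \<alpha>" "\<alpha> \<le> 2"
  shows "(\<integral>\<^sup>+\<xi>. ennreal ((2 * pi * norm \<xi>) powr \<alpha> * (l ^ DIM('a) * gaussian (1 / l) (\<xi>::'a::euclidean_space))\<^sup>2) \<partial>lborel)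
    \<le> ennreal ((1 + 4 * pi) * l powr (real DIM('a) - \<alpha>))"
proof -
  define C where "C = l ^ (2 * DIM('a)) * ((1 + 4 * pi) * l powr (- \<alpha>))"
  have C: "C \<ge> 0" using l by (simp add: C_def)
  have "(\<integral>\<^sup>+\<xi>. ennreal ((2 * pi * norm \<xi>) powr \<alpha> * (l ^ DIM('a) * gaussian (1 / l) (\<xi>::'a))\<^sup>2) \<partial>lborel)
      \<le> (\<integral>\<^sup>+\<xi>. ennreal C * ennreal (gaussian (1 / l) (\<xi>::'a)) \<partial>lborel)"
  proof (rule nn_integral_mono)
    fix \<xi> :: 'a
    have "(2 * pi * norm \<xi>) powr \<alpha> * (l ^ DIM('a) * gaussian (1 / l) \<xi>)\<^sup>2
        = l ^ (2 * DIM('a)) * ((2 * pi * norm \<xi>) powr \<alpha> * gaussian (1 / l) \<xi>) * gaussian (1 / l) \<xi>"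
      by (simp add: power_mult_distrib power_mult power2_eq_square)
    also have "\<dots> \<le> C * gaussian (1 / l) \<xi>"
      unfolding C_def using powr_times_gaussian_le[OF l \<alpha>, of \<xi>] l
      by (intro mult_right_mono mult_left_mono) (auto intro: mult_nonneg_nonneg)
    finally show "ennreal ((2 * pi * norm \<xi>) powr \<alpha> * (l ^ DIM('a) * gaussian (1 / l) \<xi>)\<^sup>2)
        \<le> ennreal C * ennreal (gaussian (1 / l) \<xi>)"
      unfolding ennreal_mult[OF C gaussian_nonneg, symmetric] by (rule ennreal_leI)
  qed
  also have "\<dots> = ennreal C * ennreal ((1 / l) ^ DIM('a))"
    using l by (simp add: nn_integral_cmult nn_integral_gaussian)
  also have "\<dots> = ennreal ((1 + 4 * pi) * l powr (real DIM('a) - \<alpha>))"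
  proof -
    have "l ^ (2 * DIM('a)) * (1 / l) ^ DIM('a) * l powr (- \<alpha>) = l powr (real DIM('a) - \<alpha>)"
      using l by (simp add: power_mult power2_eq_square power_one_over field_simps powr_diff powr_minus
          flip: powr_realpow)
    then show ?thesis using C l by (simp add: C_def ennreal_mult[symmetric] ac_simps)
  qed
  finally show ?thesis .
qed

lemma fourier_cmult: "fourier (\<lambda>x. c * f x) \<xi> = c * fourier f \<xi>"
  by (simp add: fourier_def mult.assoc)

lemma nn_integral_gaussian_le_fourier_pairing:
  fixes T :: "'a::euclidean_space \<Rightarrow> real" and g :: "'a \<Rightarrow> complex"
  assumes T: "\<forall>\<phi>\<in>schwartz. integrable lborel (\<lambda>x. complex_of_real (T x) * \<phi> x)"
    and g: "\<forall>\<phi>\<in>schwartz. integrable lborel (\<lambda>\<xi>. g \<xi> * \<phi> \<xi>) \<and>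
           (\<integral>x. complex_of_real (T x) * fourier \<phi> x \<partial>lborel) = (\<integral>\<xi>. g \<xi> * \<phi> \<xi> \<partial>lborel)"
    and T_nonneg: "\<And>x. T x \<ge> 0" and l: "l > 0"
  shows "(\<integral>\<^sup>+x. ennreal (T x * gaussian l x) \<partial>lborel)
    \<le> (\<integral>\<^sup>+\<xi>. ennreal (cmod (g \<xi>) * (l ^ DIM('a) * gaussian (1 / l) \<xi>)) \<partial>lborel)"
proof -
  define \<phi> where "\<phi> \<xi> = complex_of_real (l ^ DIM('a)) * complex_of_real (gaussian (1 / l) \<xi>)" for \<xi> :: 'a
  have "\<phi> \<in> schwartz"
    unfolding \<phi>_def of_real_mult[symmetric] using l by (intro gaussian_in_schwartz) simp
  then have g\<phi>: "integrable lborel (\<lambda>\<xi>. g \<xi> * \<phi> \<xi>)"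
    and pairing: "(\<integral>x. complex_of_real (T x) * fourier \<phi> x \<partial>lborel) = (\<integral>\<xi>. g \<xi> * \<phi> \<xi> \<partial>lborel)"
    using g by auto
  have "fourier \<phi> x = complex_of_real (gaussian l x)" for x
    unfolding \<phi>_def fourier_cmult fourier_gaussian[OF divide_pos_pos[OF zero_less_one l]]
    using l by (simp add: power_one_over del: of_real_mult)
  then have pairing': "complex_of_real (\<integral>x. T x * gaussian l x \<partial>lborel) = (\<integral>\<xi>. g \<xi> * \<phi> \<xi> \<partial>lborel)"
    unfolding pairing[symmetric] by (simp only: of_real_mult[symmetric] integral_complex_of_real)
  have "integrable lborel (\<lambda>x. complex_of_real (T x) * complex_of_real (gaussian l x))"
    using bspec[OF T gaussian_in_schwartz[OF l, of 1]] by simp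
  then have "integrable lborel (\<lambda>x. T x * gaussian l x)"
    by (simp only: of_real_mult[symmetric] complex_of_real_integrable_eq)
  then have "(\<integral>\<^sup>+x. ennreal (T x * gaussian l x) \<partial>lborel) = ennreal (\<integral>x. T x * gaussian l x \<partial>lborel)"
    using T_nonneg by (intro nn_integral_eq_integral) (auto intro: mult_nonneg_nonneg)
  also have "\<dots> = ennreal (cmod (\<integral>\<xi>. g \<xi> * \<phi> \<xi> \<partial>lborel))"
  proof -
    have "0 \<le> (\<integral>x. T x * gaussian l x \<partial>lborel)"
      using T_nonneg by (intro integral_nonneg_AE) (auto intro: mult_nonneg_nonneg)
    then show ?thesis unfolding pairing'[symmetric] by simp
  qed
  also have "\<dots> \<le> (\<integral>\<^sup>+\<xi>. ennreal (cmod (g \<xi> * \<phi> \<xi>)) \<partial>lborel)"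
    using integral_norm_bound_ennreal[OF g\<phi>] by simp
  also have "\<dots> = (\<integral>\<^sup>+\<xi>. ennreal (cmod (g \<xi>) * (l ^ DIM('a) * gaussian (1 / l) \<xi>)) \<partial>lborel)"
    using l by (simp add: \<phi>_def norm_mult norm_power)
  finally show ?thesis .
qed

lemma homog_sobolev_gaussian_mass_bound:
  fixes T :: "'a::euclidean_space \<Rightarrow> real"
  assumes \<alpha>: "0 < \<alpha>" "\<alpha> \<le> 2" and sob: "in_homog_sobolev_neg \<alpha> T" and T_nonneg: "\<And>x. T x \<ge> 0"
  shows "\<exists>K<\<infinity>. \<forall>l>0. (\<integral>\<^sup>+x. ennreal (T x * gaussian l x) \<partial>lborel)
                   \<le> ennreal (l powr ((real DIM('a) - \<alpha>) / 2)) * K"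
proof -
  define s where "s = real DIM('a) - \<alpha>"
  obtain g :: "'a \<Rightarrow> complex" where g: "locally_integrable g"
    and g_pairing: "\<forall>\<phi>\<in>schwartz. integrable lborel (\<lambda>\<xi>. g \<xi> * \<phi> \<xi>) \<and>
           (\<integral>x. complex_of_real (T x) * fourier \<phi> x \<partial>lborel) = (\<integral>\<xi>. g \<xi> * \<phi> \<xi> \<partial>lborel)"
    and g_energy: "(\<integral>\<^sup>+\<xi>. ennreal ((2 * pi * norm \<xi>) powr (- \<alpha>) * (cmod (g \<xi>))\<^sup>2) \<partial>lborel) < \<infinity>"
    and T_integrable: "\<forall>\<phi>\<in>schwartz. integrable lborel (\<lambda>x. complex_of_real (T x) * \<phi> x)"
    using sob unfolding in_homog_sobolev_neg_def by blast
  have [measurable]: "g \<in> borel_measurable lborel"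
    using g unfolding locally_integrable_def by blast
  define A where "A = (\<integral>\<^sup>+\<xi>. ennreal ((2 * pi * norm \<xi>) powr (- \<alpha>) * (cmod (g \<xi>))\<^sup>2) \<partial>lborel)"
  have "(\<integral>\<^sup>+x. ennreal (T x * gaussian l x) \<partial>lborel) \<le> ennreal (l powr (s / 2)) * (A + ennreal (1 + 4 * pi))"
    if l: "l > 0" for l
  proof -
    \<comment> \<open>This choice of the AM-GM parameter balances t A against (1 + 4 pi) l^s / t.\<close>
    define t where "t = l powr (s / 2)"
    have t: "t > 0" using l by (simp add: t_def)
    have weights: "AE \<xi>::'a in lborel. 0 < (2 * pi * norm \<xi>) powr (- \<alpha>) \<and>
        (2 * pi * norm \<xi>) powr (- \<alpha>) * (2 * pi * norm \<xi>) powr \<alpha> = 1"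
      using AE_lborel_singleton[of 0] by eventually_elim (simp add: powr_add[symmetric])
    have "(\<integral>\<^sup>+x. ennreal (T x * gaussian l x) \<partial>lborel)
        \<le> (\<integral>\<^sup>+\<xi>. ennreal (cmod (g \<xi>) * (l ^ DIM('a) * gaussian (1 / l) \<xi>)) \<partial>lborel)"
      by (rule nn_integral_gaussian_le_fourier_pairing[OF T_integrable g_pairing T_nonneg l])
    also have "\<dots> \<le> ennreal t * A + ennreal (1 / t) *
        (\<integral>\<^sup>+\<xi>. ennreal ((2 * pi * norm (\<xi>::'a)) powr \<alpha> * (l ^ DIM('a) * gaussian (1 / l) \<xi>)\<^sup>2) \<partial>lborel)"
      unfolding A_def
      by (rule nn_integral_mult_le_weighted_squares[OF t weights]) measurable
    also have "\<dots> \<le> ennreal t * A + ennreal (1 / t) * ennreal ((1 + 4 * pi) * l powr s)"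
      unfolding s_def by (intro add_left_mono mult_left_mono nn_integral_powr_times_gaussian_square_le l \<alpha>) simp
    also have "ennreal (1 / t) * ennreal ((1 + 4 * pi) * l powr s) = ennreal t * ennreal (1 + 4 * pi)"
    proof -
      have "1 / t * ((1 + 4 * pi) * l powr s) = t * (1 + 4 * pi)"
        using l by (simp add: t_def field_simps flip: powr_add)
      then show ?thesis using t by (simp add: ennreal_mult'[symmetric] del: ennreal_plus)
    qed
    finally show ?thesis by (simp add: t_def distrib_left)
  qed
  moreover have "A + ennreal (1 + 4 * pi) < \<infinity>"
    using g_energy by (simp add: A_def)
  ultimately show ?thesis unfolding s_def by blast
qed

section \<open>Growth of the mass of T and weighted integrability\<close>

lemma cball_in_borel [measurable]: "cball (c::'a::euclidean_space) r \<in> sets borel"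
  by simp

lemma set_nn_integral_cball_le_gaussian:
  fixes f :: "'a::euclidean_space \<Rightarrow> real"
  assumes f_nonneg: "\<And>x. f x \<ge> 0" and [measurable]: "f \<in> borel_measurable lborel" and l: "l > 0"
  shows "(\<integral>\<^sup>+x\<in>cball 0 l. ennreal (f x) \<partial>lborel) \<le> ennreal (exp pi) * (\<integral>\<^sup>+x. ennreal (f x * gaussian l x) \<partial>lborel)"
proof -
  have "ennreal (f x) * indicator (cball 0 l) x \<le> ennreal (exp pi) * ennreal (f x * gaussian l x)" for x :: 'a
  proof (cases "x \<in> cball 0 l")
    case True
    then have "(norm x / l)\<^sup>2 \<le> 1"
      using l by (simp add: power_le_one)
    then have "1 \<le> exp pi * gaussian l x"
      by (simp add: gaussian_def mult_exp_exp)
    then have "f x \<le> exp pi * (f x * gaussian l x)"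
      using f_nonneg[of x] by (metis mult.left_commute mult_left_mono mult.right_neutral)
    then show ?thesis
      using True f_nonneg[of x] by (simp add: ennreal_mult[symmetric] ennreal_leI)
  qed simp
  then have "(\<integral>\<^sup>+x\<in>cball 0 l. ennreal (f x) \<partial>lborel)
      \<le> (\<integral>\<^sup>+x. ennreal (exp pi) * ennreal (f x * gaussian l x) \<partial>lborel)"
    by (intro nn_integral_mono)
  also have "\<dots> = ennreal (exp pi) * (\<integral>\<^sup>+x. ennreal (f x * gaussian l x) \<partial>lborel)"
    by (rule nn_integral_cmult) measurable
  finally show ?thesis .
qed

lemma nn_integral_le_of_cball_bounded:
  fixes f :: "'a::euclidean_space \<Rightarrow> ennreal"
  assumes [measurable]: "f \<in> borel_measurable lborel"
    and bound: "\<And>r. r \<ge> 1 \<Longrightarrow> (\<integral>\<^sup>+x\<in>cball 0 r. f x \<partial>lborel) \<le> K"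
  shows "(\<integral>\<^sup>+x. f x \<partial>lborel) \<le> K"
proof -
  define F where "F n x = f x * indicator (cball 0 (real n + 1)) x" for n :: nat and x :: 'a
  have "incseq F"
    by (intro monoI le_funI) (auto simp: F_def indicator_def)
  have sup: "(SUP n. F n x) = f x" for x
  proof (rule antisym)
    show "(SUP n. F n x) \<le> f x"
      by (intro SUP_least) (auto simp: F_def indicator_def)
    have "F (nat \<lceil>norm x\<rceil>) x = f x"
      unfolding F_def by (simp add: indicator_def) linarith
    then show "f x \<le> (SUP n. F n x)" by (metis SUP_upper UNIV_I)
  qed
  have "(\<integral>\<^sup>+x. f x \<partial>lborel) = (\<integral>\<^sup>+x. (SUP n. F n x) \<partial>lborel)"
    by (simp only: sup)
  also have "\<dots> = (SUP n. integral\<^sup>N lborel (F n))"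
    by (rule nn_integral_monotone_convergence_SUP[OF \<open>incseq F\<close>]) (unfold F_def, measurable)
  also have "\<dots> \<le> K"
    using bound by (intro SUP_least) (simp add: F_def[abs_def])
  finally show ?thesis .
qed

lemma dyadic_radius_weight:
  fixes r s :: real
  assumes r: "r \<ge> 0" and s: "s \<ge> 0"
  shows "\<exists>k::nat. r \<le> 2 ^ k \<and> (1 + r) powr (- s) \<le> 2 powr (s * (1 - real k))"
proof -
  obtain n :: nat where "r \<le> 2 ^ n" using real_arch_pow[of 2 r] by (auto intro: less_imp_le)
  define k where "k = (LEAST k::nat. r \<le> 2 ^ k)"
  have k_ge: "r \<le> 2 ^ k" unfolding k_def by (rule LeastI[of _ n]) fact
  have k_le: "2 ^ k \<le> 2 * (1 + r)"
  proof (cases k)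
    case 0 then show ?thesis using r by simp
  next
    case (Suc j)
    then have "\<not> r \<le> 2 ^ j" unfolding k_def by (metis Least_le Suc_n_not_le_n k_def)
    then show ?thesis using Suc by simp
  qed
  have "(1 + r) powr (- s) \<le> (2 ^ k / 2) powr (- s)"
    using k_le s r by (intro powr_mono2') auto
  also have "(2 ^ k / 2 :: real) = 2 powr (real k - 1)"
    by (simp add: powr_diff powr_realpow)
  also have "(2 powr (real k - 1)) powr (- s) = 2 powr (s * (1 - real k))"
    by (simp add: powr_powr algebra_simps)
  finally show ?thesis using k_ge by blast
qed

lemma weighted_nn_integral_finite_of_cball_growth:
  fixes f :: "'a::euclidean_space \<Rightarrow> ennreal"
  assumes [measurable]: "f \<in> borel_measurable lborel"
    and s: "0 \<le> s" "\<beta> < s" and K: "K < \<infinity>"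
    and bound: "\<And>r. r \<ge> 1 \<Longrightarrow> (\<integral>\<^sup>+x\<in>cball 0 r. f x \<partial>lborel) \<le> ennreal (r powr \<beta>) * K"
  shows "(\<integral>\<^sup>+x. f x * ennreal ((1 + norm x) powr (- s)) \<partial>lborel) < \<infinity>"
proof -
  define q where "q = 2 powr (\<beta> - s)"
  have q: "0 < q" "q < 1" using s by (auto simp: q_def powr_less_one)
  define F where "F k x = ennreal (2 powr (s * (1 - real k))) * (f x * indicator (cball 0 (2 ^ k)) x)"
    for k :: nat and x :: 'a
  have "(\<integral>\<^sup>+x. f x * ennreal ((1 + norm x) powr (- s)) \<partial>lborel) \<le> (\<integral>\<^sup>+x. (\<Sum>k. F k x) \<partial>lborel)"
  proof (rule nn_integral_mono)
    fix x :: 'a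
    obtain k where k: "norm x \<le> 2 ^ k" "(1 + norm x) powr (- s) \<le> 2 powr (s * (1 - real k))"
      using dyadic_radius_weight[OF norm_ge_zero s(1)] by blast
    have "f x * ennreal ((1 + norm x) powr (- s)) \<le> F k x"
      using k by (auto simp: F_def mult.commute intro!: mult_left_mono ennreal_leI)
    also have "F k x \<le> (\<Sum>k. F k x)"
      using sum_le_suminf[OF summableI, of "{k}" "\<lambda>k. F k x"] by simp
    finally show "f x * ennreal ((1 + norm x) powr (- s)) \<le> (\<Sum>k. F k x)" .
  qed
  also have "\<dots> = (\<Sum>k. integral\<^sup>N lborel (F k))"
    by (rule nn_integral_suminf) (simp add: F_def)
  also have "\<dots> \<le> (\<Sum>k. ennreal (2 powr s * q ^ k) * K)"
  proof (intro suminf_le allI summableI)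
    fix k :: nat
    have "integral\<^sup>N lborel (F k) = ennreal (2 powr (s * (1 - real k))) * (\<integral>\<^sup>+x\<in>cball 0 (2 ^ k). f x \<partial>lborel)"
      unfolding F_def by (rule nn_integral_cmult) measurable
    also have "\<dots> \<le> ennreal (2 powr (s * (1 - real k))) * (ennreal ((2 ^ k) powr \<beta>) * K)"
      by (intro mult_left_mono bound) auto
    also have "\<dots> = ennreal (2 powr (s * (1 - real k)) * (2 ^ k) powr \<beta>) * K"
      by (simp add: ennreal_mult mult.assoc)
    also have "2 powr (s * (1 - real k)) * (2 ^ k) powr \<beta> = 2 powr s * q ^ k"
      by (simp add: q_def powr_realpow[symmetric] powr_powr powr_power powr_add[symmetric] algebra_simps)
    finally show "integral\<^sup>N lborel (F k) \<le> ennreal (2 powr s * q ^ k) * K" .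
  qed
  also have "\<dots> = ennreal (\<Sum>k. 2 powr s * q ^ k) * K"
    using q by (simp add: ennreal_suminf_multc suminf_ennreal2 summable_geometric)
  also have "\<dots> < \<infinity>"
    using K by (simp add: ennreal_mult_less_top)
  finally show ?thesis .
qed

section \<open>Riesz potentials\<close>

lemma exists_dyadic_shell:
  fixes r \<rho> :: real
  assumes r: "0 < r" "r \<le> \<rho>"
  shows "\<exists>k::nat. \<rho> / 2 ^ Suc k < r \<and> r \<le> \<rho> / 2 ^ k"
proof -
  define k where "k = nat \<lfloor>log 2 (\<rho> / r)\<rfloor>"
  have "1 \<le> \<rho> / r" using r by simp
  then have "0 \<le> log 2 (\<rho> / r)" by simp
  then have "real_of_int \<lfloor>log 2 (\<rho> / r)\<rfloor> = real k" by (simp add: k_def)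
  moreover have "2 powr \<lfloor>log 2 (\<rho> / r)\<rfloor> \<le> \<rho> / r \<and> \<rho> / r < 2 powr (\<lfloor>log 2 (\<rho> / r)\<rfloor> + 1)"
    using r by (subst floor_log_eq_powr_iff[symmetric]) auto
  ultimately have "2 ^ k \<le> \<rho> / r" "\<rho> / r < 2 ^ Suc k"
    by (simp_all add: powr_realpow[symmetric] powr_add)
  then show ?thesis using r by (intro exI[of _ k]) (simp add: field_simps)
qed

lemma nn_integral_cball_norm_powr_finite:
  assumes s: "0 \<le> s" "s < real DIM('a)" and \<rho>: "\<rho> > 0"
  shows "(\<integral>\<^sup>+z\<in>cball (0::'a::euclidean_space) \<rho>. ennreal (norm z powr (- s)) \<partial>lborel) < \<infinity>"
proof -
  define d where "d = real DIM('a)"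
  define F where "F k z = ennreal ((\<rho> / 2 ^ Suc k) powr (- s)) * indicator (cball (0::'a) (\<rho> / 2 ^ k)) z"
    for k :: nat and z :: 'a
  have "(\<integral>\<^sup>+z\<in>cball (0::'a) \<rho>. ennreal (norm z powr (- s)) \<partial>lborel) \<le> (\<integral>\<^sup>+z. (\<Sum>k. F k z) \<partial>lborel)"
  proof (rule nn_integral_mono)
    fix z :: 'a
    show "ennreal (norm z powr (- s)) * indicator (cball 0 \<rho>) z \<le> (\<Sum>k. F k z)"
    proof (cases "z \<noteq> 0 \<and> norm z \<le> \<rho>")
      case False then show ?thesis by (auto simp: indicator_def)
    next
      case True
      then obtain k :: nat where k: "\<rho> / 2 ^ Suc k < norm z" "norm z \<le> \<rho> / 2 ^ k"
        using exists_dyadic_shell[of "norm z" \<rho>] by auto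
      have "norm z powr (- s) \<le> (\<rho> / 2 ^ Suc k) powr (- s)"
        using k \<rho> s by (intro powr_mono2') auto
      then have "ennreal (norm z powr (- s)) * indicator (cball 0 \<rho>) z \<le> F k z"
        using True k by (auto simp: F_def indicator_def ennreal_leI)
      also have "F k z \<le> (\<Sum>k. F k z)"
        using sum_le_suminf[OF summableI, of "{k}" "\<lambda>k. F k z"] by simp
      finally show ?thesis .
    qed
  qed
  also have "\<dots> = (\<Sum>k. integral\<^sup>N lborel (F k))"
    by (rule nn_integral_suminf) (simp add: F_def)
  also have "\<dots> = (\<Sum>k. ennreal (unit_ball_vol d * 2 powr s * \<rho> powr (d - s) * (2 powr (s - d)) ^ k))"
  proof (intro suminf_cong)
    fix k
    have "integral\<^sup>N lborel (F k) = ennreal ((\<rho> / 2 ^ Suc k) powr (- s) * (unit_ball_vol d * (\<rho> / 2 ^ k) ^ DIM('a)))"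
      using \<rho> by (simp add: F_def[abs_def] nn_integral_cmult_indicator emeasure_cball ennreal_mult d_def)
    also have "(\<rho> / 2 ^ Suc k) powr (- s) * (unit_ball_vol d * (\<rho> / 2 ^ k) ^ DIM('a))
        = unit_ball_vol d * 2 powr s * \<rho> powr (d - s) * (2 powr (s - d)) ^ k"
      using \<rho> by (simp add: d_def powr_divide powr_minus_divide powr_diff powr_power powr_realpow[symmetric]
          powr_powr powr_mult powr_add[symmetric] field_simps)
    finally show "integral\<^sup>N lborel (F k) = ennreal (unit_ball_vol d * 2 powr s * \<rho> powr (d - s) * (2 powr (s - d)) ^ k)" .
  qed
  also have "\<dots> = ennreal (\<Sum>k. unit_ball_vol d * 2 powr s * \<rho> powr (d - s) * (2 powr (s - d)) ^ k)"
    using s by (intro suminf_ennreal2) (auto intro!: summable_mult summable_geometric simp: d_def powr_less_one)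
  also have "\<dots> < \<infinity>" by simp
  finally show ?thesis .
qed

lemma nn_integral_lborel_translate:
  fixes y :: "'a::euclidean_space"
  assumes [measurable]: "f \<in> borel_measurable borel"
  shows "(\<integral>\<^sup>+x. f x \<partial>lborel) = (\<integral>\<^sup>+z. f (y + z) \<partial>lborel)"
proof -
  have "(\<integral>\<^sup>+x. f x \<partial>lborel) = (\<integral>\<^sup>+x. f x \<partial>distr lborel borel ((+) y))"
    by (simp add: lborel_distr_plus)
  also have "\<dots> = (\<integral>\<^sup>+z. f (y + z) \<partial>lborel)"
    by (subst nn_integral_distr) auto
  finally show ?thesis .
qed

lemma nn_integral_cball_norm_diff_powr_bound:
  assumes s: "0 \<le> s" "s < real DIM('a)" and R: "R \<ge> 1"
  shows "\<exists>C<\<infinity>. \<forall>y::'a::euclidean_space.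
    (\<integral>\<^sup>+x\<in>cball 0 R. ennreal (norm (x - y) powr (- s)) \<partial>lborel) \<le> C * ennreal ((1 + norm y) powr (- s))"
proof -
  define L where "L = (\<integral>\<^sup>+z\<in>cball (0::'a) (3 * R). ennreal (norm z powr (- s)) \<partial>lborel)"
  define C where "C = ennreal (4 powr s) * emeasure lborel (cball (0::'a) R) + L * ennreal ((1 + 2 * R) powr s)"
  have "L < \<infinity>"
    unfolding L_def using s R by (intro nn_integral_cball_norm_powr_finite) auto
  then have "C < \<infinity>"
    unfolding C_def using emeasure_lborel_cball_finite[of "0::'a" R] by (simp add: ennreal_mult_less_top)
  moreover have "(\<integral>\<^sup>+x\<in>cball 0 R. ennreal (norm (x - y) powr (- s)) \<partial>lborel) \<le> C * ennreal ((1 + norm y) powr (- s))"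
    for y :: 'a
    \<comment> \<open>For far y the kernel is O((1 + |y|)^(-s)) on the ball; for near y the ball lies in B(y, 3R).\<close>
  proof (cases "norm y \<ge> 2 * R")
    case True
    have "ennreal (norm (x - y) powr (- s)) * indicator (cball 0 R) x
        \<le> ennreal (4 powr s * (1 + norm y) powr (- s)) * indicator (cball 0 R) x" for x :: 'a
    proof (cases "x \<in> cball 0 R")
      case x: True
      have "norm y - norm x \<le> norm (x - y)" by (metis norm_minus_commute norm_triangle_ineq2)
      moreover have "norm x \<le> R" using x by simp
      ultimately have "1 + norm y \<le> 4 * norm (x - y)" using True R by linarith
      then have "(1 + norm y) / 4 \<le> norm (x - y)" by simp
      then have "norm (x - y) powr (- s) \<le> ((1 + norm y) / 4) powr (- s)"
        using s by (intro powr_mono2') (simp_all add: add_pos_nonneg)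
      also have "\<dots> = (1 + norm y) powr (- s) / 4 powr (- s)"
        by (rule powr_divide)
      also have "\<dots> = 4 powr s * (1 + norm y) powr (- s)"
        by (simp only: powr_minus[of 4 s] divide_inverse inverse_inverse_eq mult.commute)
      finally show ?thesis using x by (simp add: ennreal_leI)
    qed simp
    then have "(\<integral>\<^sup>+x\<in>cball 0 R. ennreal (norm (x - y) powr (- s)) \<partial>lborel)
        \<le> ennreal (4 powr s * (1 + norm y) powr (- s)) * emeasure lborel (cball (0::'a) R)"
      by (subst nn_integral_cmult_indicator[symmetric]) (auto intro: nn_integral_mono)
    also have "\<dots> = ennreal (4 powr s) * emeasure lborel (cball (0::'a) R) * ennreal ((1 + norm y) powr (- s))"
      by (simp add: ennreal_mult ac_simps)
    also have "\<dots> \<le> C * ennreal ((1 + norm y) powr (- s))"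
      unfolding C_def by (intro mult_right_mono add_increasing2) auto
    finally show ?thesis .
  next
    case False
    have "(\<integral>\<^sup>+x\<in>cball 0 R. ennreal (norm (x - y) powr (- s)) \<partial>lborel)
        \<le> (\<integral>\<^sup>+x\<in>cball y (3 * R). ennreal (norm (x - y) powr (- s)) \<partial>lborel)"
    proof (rule nn_integral_mono)
      fix x :: 'a
      have "x \<in> cball 0 R \<Longrightarrow> x \<in> cball y (3 * R)"
        using False by (simp add: dist_norm) (smt (verit) norm_minus_commute norm_triangle_ineq4)
      then show "ennreal (norm (x - y) powr (- s)) * indicator (cball 0 R) x
          \<le> ennreal (norm (x - y) powr (- s)) * indicator (cball y (3 * R)) x"
        by (auto simp: indicator_def)
    qed
    also have "\<dots> = L"
      unfolding L_def by (subst nn_integral_lborel_translate[of _ y]) (auto simp: indicator_def dist_norm)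
    also have "L \<le> L * ennreal ((1 + 2 * R) powr s * (1 + norm y) powr (- s))"
    proof -
      have "(1 + norm y) powr s \<le> (1 + 2 * R) powr s" using False s by (intro powr_mono2) auto
      then have "1 \<le> (1 + 2 * R) powr s * (1 + norm y) powr (- s)"
        by (simp add: powr_minus divide_inverse[symmetric] le_divide_eq add_nonneg_eq_0_iff)
      then show ?thesis
        using mult_left_mono[of 1 _ L] by (simp add: ennreal_leI)
    qed
    also have "\<dots> = L * ennreal ((1 + 2 * R) powr s) * ennreal ((1 + norm y) powr (- s))"
      by (simp add: ennreal_mult ac_simps)
    also have "\<dots> \<le> C * ennreal ((1 + norm y) powr (- s))"
      unfolding C_def by (intro mult_right_mono add_increasing) auto
    finally show ?thesis .
  qed
  ultimately show ?thesis by blast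
qed

lemma set_nn_integral_cball_norm_diff_powr_convolution_finite:
  fixes T :: "'a::euclidean_space \<Rightarrow> real"
  assumes T_nonneg: "\<And>y. T y \<ge> 0" and [measurable]: "T \<in> borel_measurable lborel"
    and s: "0 \<le> s" "s < real DIM('a)" and R: "R \<ge> 1"
    and weighted: "(\<integral>\<^sup>+y. ennreal (T y * (1 + norm y) powr (- s)) \<partial>lborel) < \<infinity>"
  shows "(\<integral>\<^sup>+x\<in>cball 0 R. (\<integral>\<^sup>+y. ennreal (norm (x - y) powr (- s) * T y) \<partial>lborel) \<partial>lborel) < \<infinity>"
proof -
  obtain C where C: "C < \<infinity>" and bound: "\<And>y::'a.
      (\<integral>\<^sup>+x\<in>cball 0 R. ennreal (norm (x - y) powr (- s)) \<partial>lborel) \<le> C * ennreal ((1 + norm y) powr (- s))"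
    using nn_integral_cball_norm_diff_powr_bound[OF s R] by blast
  have "(\<integral>\<^sup>+x\<in>cball 0 R. (\<integral>\<^sup>+y. ennreal (norm (x - y) powr (- s) * T y) \<partial>lborel) \<partial>lborel)
      = (\<integral>\<^sup>+x. (\<integral>\<^sup>+y. ennreal (T y) * (ennreal (norm (x - y) powr (- s)) * indicator (cball 0 R) x) \<partial>lborel) \<partial>lborel)"
  proof (rule nn_integral_cong)
    fix x :: 'a
    have "(\<integral>\<^sup>+y. ennreal (norm (x - y) powr (- s) * T y) \<partial>lborel) * indicator (cball 0 R) x
        = (\<integral>\<^sup>+y. ennreal (norm (x - y) powr (- s) * T y) * indicator (cball 0 R) x \<partial>lborel)"
      by (rule nn_integral_multc[symmetric]) measurable
    then show "(\<integral>\<^sup>+y. ennreal (norm (x - y) powr (- s) * T y) \<partial>lborel) * indicator (cball 0 R) x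
        = (\<integral>\<^sup>+y. ennreal (T y) * (ennreal (norm (x - y) powr (- s)) * indicator (cball 0 R) x) \<partial>lborel)"
      using T_nonneg by (simp add: ennreal_mult ac_simps)
  qed
  also have "\<dots> = (\<integral>\<^sup>+y. (\<integral>\<^sup>+x. ennreal (T y) * (ennreal (norm (x - y) powr (- s)) * indicator (cball 0 R) x) \<partial>lborel) \<partial>lborel)"
    by (rule lborel_pair.Fubini') measurable
  also have "\<dots> = (\<integral>\<^sup>+y. ennreal (T y) * (\<integral>\<^sup>+x\<in>cball 0 R. ennreal (norm (x - y) powr (- s)) \<partial>lborel) \<partial>lborel)"
    by (simp add: nn_integral_cmult)
  also have "\<dots> \<le> (\<integral>\<^sup>+y. C * ennreal (T y * (1 + norm y) powr (- s)) \<partial>lborel)"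
  proof (rule nn_integral_mono)
    fix y :: 'a
    have "ennreal (T y) * (\<integral>\<^sup>+x\<in>cball 0 R. ennreal (norm (x - y) powr (- s)) \<partial>lborel)
        \<le> ennreal (T y) * (C * ennreal ((1 + norm y) powr (- s)))"
      by (rule mult_left_mono[OF bound]) simp
    then show "ennreal (T y) * (\<integral>\<^sup>+x\<in>cball 0 R. ennreal (norm (x - y) powr (- s)) \<partial>lborel)
        \<le> C * ennreal (T y * (1 + norm y) powr (- s))"
      using T_nonneg[of y] by (simp add: ennreal_mult ac_simps)
  qed
  also have "\<dots> = C * (\<integral>\<^sup>+y. ennreal (T y * (1 + norm y) powr (- s)) \<partial>lborel)"
    by (rule nn_integral_cmult) measurable
  also have "\<dots> < \<infinity>"
    using C weighted by (simp add: ennreal_mult_less_top)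
  finally show ?thesis .
qed

lemma AE_nn_integral_norm_diff_powr_finite:
  fixes T :: "'a::euclidean_space \<Rightarrow> real"
  assumes T_nonneg: "\<And>y. T y \<ge> 0" and T_meas [measurable]: "T \<in> borel_measurable lborel"
    and s: "0 \<le> s" "s < real DIM('a)"
    and weighted: "(\<integral>\<^sup>+y. ennreal (T y * (1 + norm y) powr (- s)) \<partial>lborel) < \<infinity>"
  shows "AE x in lborel. (\<integral>\<^sup>+y. ennreal (norm (x - y) powr (- s) * T y) \<partial>lborel) < \<infinity>"
proof -
  define F where "F x = (\<integral>\<^sup>+y. ennreal (norm (x - y) powr (- s) * T y) \<partial>lborel)" for x :: 'a
  have [measurable]: "F \<in> borel_measurable lborel"
    unfolding F_def by measurable
  have "AE x in lborel. x \<in> cball 0 (real n + 1) \<longrightarrow> F x < \<infinity>" for n :: nat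
  proof -
    have "(\<integral>\<^sup>+x\<in>cball 0 (real n + 1). F x \<partial>lborel) < \<infinity>"
      unfolding F_def by (rule set_nn_integral_cball_norm_diff_powr_convolution_finite[OF T_nonneg T_meas s _ weighted]) simp
    then have "AE x in lborel. F x * indicator (cball 0 (real n + 1)) x \<noteq> \<infinity>"
      by (intro nn_integral_PInf_AE) (simp_all add: less_top)
    then show ?thesis
      by eventually_elim (auto simp: indicator_def less_top)
  qed
  then have "AE x in lborel. \<forall>n::nat. x \<in> cball 0 (real n + 1) \<longrightarrow> F x < \<infinity>"
    unfolding AE_all_countable by blast
  then show ?thesis
  proof eventually_elim
    case (elim x)
    obtain n :: nat where "norm x \<le> real n" using real_arch_simple by blast
    then have "x \<in> cball 0 (real n + 1)" by simp
    then show ?case using elim unfolding F_def by blast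
  qed
qed

lemma AE_riesz_potential_finite:
  fixes T :: "'a::euclidean_space \<Rightarrow> real"
  assumes T_nonneg: "\<And>y. T y \<ge> 0" and T_meas [measurable]: "T \<in> borel_measurable lborel"
    and \<alpha>: "0 < \<alpha>" "\<alpha> \<le> real DIM('a)"
    and weighted: "(\<integral>\<^sup>+y. ennreal (T y * (1 + norm y) powr (- (real DIM('a) - \<alpha>))) \<partial>lborel) < \<infinity>"
  shows "AE x in lborel. (\<integral>\<^sup>+y. ennreal (riesz_kernel \<alpha> (x - y) * T y) \<partial>lborel) < \<infinity>"
proof -
  have "0 \<le> real DIM('a) - \<alpha>" "real DIM('a) - \<alpha> < real DIM('a)" using \<alpha> by simp_all
  from AE_nn_integral_norm_diff_powr_finite[OF T_nonneg T_meas this weighted]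
  show ?thesis
  proof eventually_elim
  case (elim x)
  define c where "c = riesz_const DIM('a) \<alpha>"
  have "(\<integral>\<^sup>+y. ennreal (riesz_kernel \<alpha> (x - y) * T y) \<partial>lborel)
      \<le> (\<integral>\<^sup>+y. ennreal \<bar>c\<bar> * ennreal (norm (x - y) powr (- (real DIM('a) - \<alpha>)) * T y) \<partial>lborel)"
  proof (rule nn_integral_mono)
    fix y
    have "c * norm (x - y) powr (- (real DIM('a) - \<alpha>)) * T y \<le> \<bar>c\<bar> * (norm (x - y) powr (- (real DIM('a) - \<alpha>)) * T y)"
      using T_nonneg[of y] by (simp add: mult.assoc mult_right_mono)
    then show "ennreal (riesz_kernel \<alpha> (x - y) * T y)
        \<le> ennreal \<bar>c\<bar> * ennreal (norm (x - y) powr (- (real DIM('a) - \<alpha>)) * T y)"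
      using T_nonneg[of y] by (simp add: riesz_kernel_def c_def ennreal_mult[symmetric] ennreal_leI)
  qed
  also have "\<dots> = ennreal \<bar>c\<bar> * (\<integral>\<^sup>+y. ennreal (norm (x - y) powr (- (real DIM('a) - \<alpha>)) * T y) \<partial>lborel)"
    by (rule nn_integral_cmult) measurable
  also have "\<dots> < \<infinity>"
    using elim by (simp add: ennreal_mult_less_top)
  finally show ?case .
qed
qed

lemma weighted_nn_integral_finite_of_gaussian_bound:
  fixes T :: "'a::euclidean_space \<Rightarrow> real"
  assumes T_nonneg: "\<And>x. T x \<ge> 0" and T_meas [measurable]: "T \<in> borel_measurable lborel"
    and s: "s \<ge> 0" and K: "K < \<infinity>"
    and bound: "\<And>l. l > 0 \<Longrightarrow> (\<integral>\<^sup>+x. ennreal (T x * gaussian l x) \<partial>lborel) \<le> ennreal (l powr (s / 2)) * K"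
  shows "(\<integral>\<^sup>+x. ennreal (T x * (1 + norm x) powr (- s)) \<partial>lborel) < \<infinity>"
proof -
  have ball: "(\<integral>\<^sup>+x\<in>cball 0 r. ennreal (T x) \<partial>lborel) \<le> ennreal (r powr (s / 2)) * (ennreal (exp pi) * K)"
    if r: "r \<ge> 1" for r
  proof -
    have "(\<integral>\<^sup>+x\<in>cball 0 r. ennreal (T x) \<partial>lborel) \<le> ennreal (exp pi) * (\<integral>\<^sup>+x. ennreal (T x * gaussian r x) \<partial>lborel)"
      using r by (intro set_nn_integral_cball_le_gaussian[OF T_nonneg T_meas]) simp
    also have "\<dots> \<le> ennreal (exp pi) * (ennreal (r powr (s / 2)) * K)"
      using r by (intro mult_left_mono bound) simp_all
    finally show ?thesis by (simp only: ac_simps)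
  qed
  have K': "ennreal (exp pi) * K < \<infinity>"
    using K by (simp add: ennreal_mult_less_top)
  have weight: "ennreal (T x * (1 + norm x) powr (- s)) = ennreal (T x) * ennreal ((1 + norm x) powr (- s))" for x
    using T_nonneg by (simp add: ennreal_mult)
  show ?thesis
  proof (cases "s = 0")
    case True
    have "(\<integral>\<^sup>+x. ennreal (T x) \<partial>lborel) \<le> ennreal (exp pi) * K"
    proof (rule nn_integral_le_of_cball_bounded)
      fix r :: real assume "r \<ge> 1"
      then show "(\<integral>\<^sup>+x\<in>cball 0 r. ennreal (T x) \<partial>lborel) \<le> ennreal (exp pi) * K"
        using ball[of r] True by simp
    qed simp
    then have "(\<integral>\<^sup>+x. ennreal (T x) \<partial>lborel) < \<infinity>"
      using K' by (rule order.strict_trans1)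
    moreover have "(1 + norm x) powr (- s) = 1" for x :: 'a
      using True by (simp add: add_nonneg_eq_0_iff)
    ultimately show ?thesis by simp
  next
    case False
    then have "s / 2 < s" using s by simp
    show ?thesis
      unfolding weight by (rule weighted_nn_integral_finite_of_cball_growth[OF _ s \<open>s / 2 < s\<close> K' ball]) simp_all
  qed
qed

theorem mainTheorem8:
  fixes T :: "'a::euclidean_space \<Rightarrow> real" and \<alpha> :: real
  assumes "DIM('a) \<ge> 2"
    and "0 < \<alpha>" and "\<alpha> \<le> 2"
    and "locally_integrable T"
    and "in_homog_sobolev_neg \<alpha> T"
    and "\<forall>x. T x \<ge> 0"
  shows "(AE x in lborel. (\<integral>\<^sup>+y. ennreal (riesz_kernel \<alpha> (x - y) * T y) \<partial>lborel) < \<infinity>)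
       \<and> (\<integral>\<^sup>+x. ennreal (T x * (1 + norm x) powr (-(real DIM('a) - \<alpha>))) \<partial>lborel) < \<infinity>"
proof -
  have T_nonneg: "\<And>x. T x \<ge> 0" using assms(6) by blast
  have T_meas: "T \<in> borel_measurable lborel"
    using assms(4) unfolding locally_integrable_def by blast
  have \<alpha>_le_dim: "\<alpha> \<le> real DIM('a)" using assms(1,3) by linarith
  obtain K where K: "K < \<infinity>" and gaussian_mass: "\<forall>l>0. (\<integral>\<^sup>+x. ennreal (T x * gaussian l x) \<partial>lborel)
      \<le> ennreal (l powr ((real DIM('a) - \<alpha>) / 2)) * K"
    using homog_sobolev_gaussian_mass_bound[OF assms(2,3,5) T_nonneg] by blast
  have weighted: "(\<integral>\<^sup>+x. ennreal (T x * (1 + norm x) powr (- (real DIM('a) - \<alpha>))) \<partial>lborel) < \<infinity>"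
    using \<alpha>_le_dim gaussian_mass
    by (intro weighted_nn_integral_finite_of_gaussian_bound[OF T_nonneg T_meas _ K]) auto
  moreover have "AE x in lborel. (\<integral>\<^sup>+y. ennreal (riesz_kernel \<alpha> (x - y) * T y) \<partial>lborel) < \<infinity>"
    by (rule AE_riesz_potential_finite[OF T_nonneg T_meas assms(2) \<alpha>_le_dim weighted])
  ultimately show ?thesis by blast
qed

end
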